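(* Let $(A,B)$ be a finite-dimensional odd-symmetric associative superalgebra over an algebraically closed field $\mathbb{K}$ of characteristic zero such that $A_{\bar 0}$ is a semi-simple $A_{\bar 0}$-bimodule. Then $$A=S_1\oplus\cdots\oplus S_n\oplus N\oplus \hat S_1\oplus\cdots\oplus\hat S_n\oplus\hat N,$$ where each $S_i$ is a simple two-sided ideal of $A_{\bar 0}$, $N=\mathrm{Ann}(A_{\bar 0})$, each $\hat S_i$ is an irreducible $A_{\bar 0}$-sub-bimodule of $A_{\bar 1}$, and $\hat N$ is an $A_{\bar 0}$-sub-bimodule of $A_{\bar 1}$ with $A_{\bar 0}\hat N=\{0\}=\hat N A_{\bar 0}$, with $A_{\bar 0}=S_1\oplus\cdots\oplus S_n\oplus N$ and $A_{\bar 1}=\hat S_1\oplus\cdots\oplus\hat S_n\oplus\hat N$. Moreover: (i) $\hat S_i\hat S_j=\{0\}=\hat S_j\hat S_i$ for $i\neq j$; (ii) $\hat S_i\hat S_i\in\{\{0\},S_i\}$ for all $i$; (iii) $\hat N\hat S_i=\{0\}=\hat S_i\hat N$ for all $i$; (iv) $\hat N\hat N\subseteq N$.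
   Context: A superalgebra is $\mathbb{Z}_2$-graded, $A=A_{\bar 0}\oplus A_{\bar 1}$, $A_\alpha A_\beta\subseteq A_{\alpha+\beta}$. An odd-symmetric structure on $A$ is a bilinear form $B$ with $B(A_{\bar 0},A_{\bar 0})=B(A_{\bar 1},A_{\bar 1})=0$ which is supersymmetric ($B(x,y)=(-1)^{|x||y|}B(y,x)$), associative ($B(xy,z)=B(x,yz)$) and non-degenerate. $A_{\bar 0}$ and $A_{\bar 1}$ are $A_{\bar 0}$-bimodules via left and right multiplication; a bimodule is semi-simple if every sub-bimodule has a complementary sub-bimodule, and irreducible if it is non-zero with no sub-bimodules other than $\{0\}$ and itself. $\mathrm{Ann}(A_{\bar 0})=\{x\in A_{\bar 0}: xA_{\bar 0}=A_{\bar 0}x=\{0\}\}$. *)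

theory Defs
  imports Main "HOL-Computational_Algebra.Polynomial"
begin

definition alg_closed :: "'k::field itself \<Rightarrow> bool" where
  "alg_closed _ \<longleftrightarrow> (\<forall>p :: 'k poly. degree p > 0 \<longrightarrow> (\<exists>x. poly p x = 0))"

text \<open>The vector space of the algebra is the whole type 'a, with scalar multiplication scale.\<close>

definition set_sum :: "'a::ab_group_add set \<Rightarrow> 'a set \<Rightarrow> 'a set" where
  "set_sum X Y = {x + y | x y. x \<in> X \<and> y \<in> Y}"

definition set_prod ::
  "('k::field \<Rightarrow> 'a::ab_group_add \<Rightarrow> 'a) \<Rightarrow> ('a \<Rightarrow> 'a \<Rightarrow> 'a) \<Rightarrow> 'a set \<Rightarrow> 'a set \<Rightarrow> 'a set" where
  "set_prod scale mul X Y = module.span scale {mul x y | x y. x \<in> X \<and> y \<in> Y}"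

definition sub_bimodule ::
  "('k::field \<Rightarrow> 'a::ab_group_add \<Rightarrow> 'a) \<Rightarrow> ('a \<Rightarrow> 'a \<Rightarrow> 'a) \<Rightarrow> 'a set \<Rightarrow> 'a set \<Rightarrow> 'a set \<Rightarrow> bool" where
  "sub_bimodule scale mul R M W \<longleftrightarrow>
     module.subspace scale W \<and> W \<subseteq> M \<and> (\<forall>a\<in>R. \<forall>w\<in>W. mul a w \<in> W \<and> mul w a \<in> W)"

definition semisimple_bimodule ::
  "('k::field \<Rightarrow> 'a::ab_group_add \<Rightarrow> 'a) \<Rightarrow> ('a \<Rightarrow> 'a \<Rightarrow> 'a) \<Rightarrow> 'a set \<Rightarrow> 'a set \<Rightarrow> bool" where
  "semisimple_bimodule scale mul R M \<longleftrightarrow>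
     (\<forall>W. sub_bimodule scale mul R M W \<longrightarrow>
        (\<exists>W'. sub_bimodule scale mul R M W' \<and> W \<inter> W' = {0} \<and> set_sum W W' = M))"

definition irreducible_sub_bimodule ::
  "('k::field \<Rightarrow> 'a::ab_group_add \<Rightarrow> 'a) \<Rightarrow> ('a \<Rightarrow> 'a \<Rightarrow> 'a) \<Rightarrow> 'a set \<Rightarrow> 'a set \<Rightarrow> 'a set \<Rightarrow> bool" where
  "irreducible_sub_bimodule scale mul R M W \<longleftrightarrow>
     sub_bimodule scale mul R M W \<and> W \<noteq> {0} \<and>
     (\<forall>V. sub_bimodule scale mul R W V \<longrightarrow> V = {0} \<or> V = W)"

definition simple_ideal ::
  "('k::field \<Rightarrow> 'a::ab_group_add \<Rightarrow> 'a) \<Rightarrow> ('a \<Rightarrow> 'a \<Rightarrow> 'a) \<Rightarrow> 'a set \<Rightarrow> 'a set \<Rightarrow> bool" where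
  "simple_ideal scale mul R S \<longleftrightarrow>
     sub_bimodule scale mul R R S \<and> set_prod scale mul S S \<noteq> {0} \<and>
     (\<forall>J. sub_bimodule scale mul S S J \<longrightarrow> J = {0} \<or> J = S)"

definition Ann :: "('a::zero \<Rightarrow> 'a \<Rightarrow> 'a) \<Rightarrow> 'a set \<Rightarrow> 'a set" where
  "Ann mul R = {x \<in> R. \<forall>a\<in>R. mul x a = 0 \<and> mul a x = 0}"

definition internal_direct_sum ::
  "('k::field \<Rightarrow> 'a::ab_group_add \<Rightarrow> 'a) \<Rightarrow> 'a set \<Rightarrow> 'i set \<Rightarrow> ('i \<Rightarrow> 'a set) \<Rightarrow> bool" where
  "internal_direct_sum scale M I W \<longleftrightarrow>
     finite I \<and> (\<forall>i\<in>I. module.subspace scale (W i)) \<and>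
     M = {(\<Sum>i\<in>I. f i) | f. \<forall>i\<in>I. f i \<in> W i} \<and>
     (\<forall>f. (\<forall>i\<in>I. f i \<in> W i) \<and> (\<Sum>i\<in>I. f i) = 0 \<longrightarrow> (\<forall>i\<in>I. f i = 0))"

definition fd_assoc_superalgebra ::
  "('k::field \<Rightarrow> 'a::ab_group_add \<Rightarrow> 'a) \<Rightarrow> ('a \<Rightarrow> 'a \<Rightarrow> 'a) \<Rightarrow> 'a set \<Rightarrow> 'a set \<Rightarrow> bool" where
  "fd_assoc_superalgebra scale mul A0 A1 \<longleftrightarrow>
     vector_space scale \<and>
     (\<exists>Bs. finite Bs \<and> module.span scale Bs = UNIV) \<and>
     (\<forall>x. Vector_Spaces.linear scale scale (mul x)) \<and>
     (\<forall>y. Vector_Spaces.linear scale scale (\<lambda>x. mul x y)) \<and>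
     (\<forall>x y z. mul (mul x y) z = mul x (mul y z)) \<and>
     module.subspace scale A0 \<and> module.subspace scale A1 \<and>
     A0 \<inter> A1 = {0} \<and> set_sum A0 A1 = UNIV \<and>
     (\<forall>x\<in>A0. \<forall>y\<in>A0. mul x y \<in> A0) \<and>
     (\<forall>x\<in>A0. \<forall>y\<in>A1. mul x y \<in> A1) \<and>
     (\<forall>x\<in>A1. \<forall>y\<in>A0. mul x y \<in> A1) \<and>
     (\<forall>x\<in>A1. \<forall>y\<in>A1. mul x y \<in> A0)"

definition odd_symmetric_structure ::
  "('k::field \<Rightarrow> 'a::ab_group_add \<Rightarrow> 'a) \<Rightarrow> ('a \<Rightarrow> 'a \<Rightarrow> 'a) \<Rightarrow> 'a set \<Rightarrow> 'a set \<Rightarrow> ('a \<Rightarrow> 'a \<Rightarrow> 'k) \<Rightarrow> bool" where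
  "odd_symmetric_structure scale mul A0 A1 B \<longleftrightarrow>
     (\<forall>x. Vector_Spaces.linear scale (*) (B x)) \<and>
     (\<forall>y. Vector_Spaces.linear scale (*) (\<lambda>x. B x y)) \<and>
     (\<forall>x\<in>A0. \<forall>y\<in>A0. B x y = 0) \<and> (\<forall>x\<in>A1. \<forall>y\<in>A1. B x y = 0) \<and>
     (\<forall>x\<in>A0. \<forall>y\<in>A0. B x y = B y x) \<and>
     (\<forall>x\<in>A0. \<forall>y\<in>A1. B x y = B y x) \<and>
     (\<forall>x\<in>A1. \<forall>y\<in>A0. B x y = B y x) \<and>
     (\<forall>x\<in>A1. \<forall>y\<in>A1. B x y = - B y x) \<and>
     (\<forall>x y z. B (mul x y) z = B x (mul y z)) \<and>
     (\<forall>x. (\<forall>y. B x y = 0) \<longrightarrow> x = 0) \<and>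
     (\<forall>y. (\<forall>x. B x y = 0) \<longrightarrow> y = 0)"

end

theory Submission
  imports Defs
begin

text \<open>Since A0 is a semisimple bimodule over itself, it splits as Ann(A0) \<oplus> S_1 \<oplus> ... \<oplus> S_n
  with irreducible sub-bimodules S_k. Each S_k is a simple ideal: the other summands act on S_k by
  zero, and S_k S_k \<noteq> 0 since otherwise S_k \<subseteq> Ann(A0). The form B pairs A0 and A1
  non-degenerately, so the decomposition dualises: the odd summand attached to a summand of A0 is the
  set of odd elements B-orthogonal to all other summands of A0, and A1 is their direct sum. A
  sub-bimodule V of the k-th odd summand is determined by the ideal of S_k orthogonal to V, which
  makes that odd summand irreducible. The product rules then follow from associativity of the
  product and of B, since S_k multiplies the k-th odd summand onto itself from either side.\<close>

section \<open>Internal direct sums\<close>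

lemma set_sum_commute: "set_sum X Y = set_sum Y X"
  using add.commute unfolding set_sum_def by blast

text \<open>Only meaningful for x in the direct sum; elsewhere the choice is arbitrary.\<close>
definition direct_sum_proj :: "'i set \<Rightarrow> ('i \<Rightarrow> 'a::comm_monoid_add set) \<Rightarrow> 'i \<Rightarrow> 'a \<Rightarrow> 'a" where
  "direct_sum_proj I W i x = (SOME f. (\<forall>i\<in>I. f i \<in> W i) \<and> x = (\<Sum>i\<in>I. f i)) i"

context vector_space
begin

lemma internal_direct_sum_sum_mem:
  "internal_direct_sum scale M I W \<Longrightarrow> (\<And>i. i \<in> I \<Longrightarrow> f i \<in> W i) \<Longrightarrow> (\<Sum>i\<in>I. f i) \<in> M"
  unfolding internal_direct_sum_def by blast

lemma internal_direct_sum_decomp: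
  assumes "internal_direct_sum scale M I W" "x \<in> M"
  obtains f where "\<And>i. i \<in> I \<Longrightarrow> f i \<in> W i" "x = (\<Sum>i\<in>I. f i)"
  using assms unfolding internal_direct_sum_def by blast

lemma internal_direct_sum_independent:
  "internal_direct_sum scale M I W \<Longrightarrow> (\<And>i. i \<in> I \<Longrightarrow> f i \<in> W i) \<Longrightarrow> (\<Sum>i\<in>I. f i) = 0 \<Longrightarrow>
   i \<in> I \<Longrightarrow> f i = 0"
  unfolding internal_direct_sum_def by blast

lemma internal_direct_sum_unique:
  assumes ds: "internal_direct_sum scale M I W"
    and f: "\<And>i. i \<in> I \<Longrightarrow> f i \<in> W i" and g: "\<And>i. i \<in> I \<Longrightarrow> g i \<in> W i"
    and eq: "(\<Sum>i\<in>I. f i) = (\<Sum>i\<in>I. g i)" and i: "i \<in> I"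
  shows "f i = g i"
proof -
  have "\<And>i. i \<in> I \<Longrightarrow> f i - g i \<in> W i"
    using ds f g unfolding internal_direct_sum_def by (auto intro: subspace_diff)
  moreover have "(\<Sum>i\<in>I. f i - g i) = 0" using eq by (simp add: sum_subtractf)
  ultimately have "f i - g i = 0" by (rule internal_direct_sum_independent[OF ds _ _ i])
  then show ?thesis by simp
qed

lemma internal_direct_sum_single_sum:
  assumes ds: "internal_direct_sum scale M I W" and j: "j \<in> I" and w: "w \<in> W j"
  shows "\<And>i. i \<in> I \<Longrightarrow> (if i = j then w else 0) \<in> W i"
    and "(\<Sum>i\<in>I. if i = j then w else 0) = w"
  using ds j w by (auto simp: internal_direct_sum_def subspace_0)

lemma internal_direct_sum_summand_subset:
  assumes ds: "internal_direct_sum scale M I W" and i: "i \<in> I"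
  shows "W i \<subseteq> M"
proof
  fix w assume "w \<in> W i"
  from internal_direct_sum_sum_mem[OF ds internal_direct_sum_single_sum(1)[OF ds i this]]
  show "w \<in> M" using internal_direct_sum_single_sum(2)[OF ds i \<open>w \<in> W i\<close>] by simp
qed

lemma internal_direct_sum_summands_disjoint:
  assumes ds: "internal_direct_sum scale M I W" and "i \<in> I" "j \<in> I" "i \<noteq> j"
    and "x \<in> W i" "x \<in> W j"
  shows "x = 0"
proof -
  note si = internal_direct_sum_single_sum[OF ds \<open>i \<in> I\<close> \<open>x \<in> W i\<close>]
  note sj = internal_direct_sum_single_sum[OF ds \<open>j \<in> I\<close> \<open>x \<in> W j\<close>]
  from internal_direct_sum_unique[OF ds si(1) sj(1) _ \<open>i \<in> I\<close>] si(2) sj(2) \<open>i \<noteq> j\<close>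
  show ?thesis by simp
qed

lemma internal_direct_sum_additive_eq_0:
  fixes h :: "'b \<Rightarrow> 'c::ab_group_add"
  assumes ds: "internal_direct_sum scale M I W" and x: "x \<in> M"
    and add: "\<And>x y. h (x + y) = h x + h y" and zero: "\<And>i w. i \<in> I \<Longrightarrow> w \<in> W i \<Longrightarrow> h w = 0"
  shows "h x = 0"
proof -
  obtain f where f: "\<And>i. i \<in> I \<Longrightarrow> f i \<in> W i" "x = (\<Sum>i\<in>I. f i)"
    using internal_direct_sum_decomp[OF ds x] by blast
  have "h x = (\<Sum>i\<in>I. h (f i))"
    unfolding f(2) by (rule additive.sum) (rule additive.intro, fact add)
  also have "\<dots> = 0" using f(1) zero by (intro sum.neutral) auto
  finally show ?thesis .
qed

lemma direct_sum_proj: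
  assumes ds: "internal_direct_sum scale M I W" and x: "x \<in> M"
  shows "\<And>i. i \<in> I \<Longrightarrow> direct_sum_proj I W i x \<in> W i" "x = (\<Sum>i\<in>I. direct_sum_proj I W i x)"
proof -
  have "\<exists>f. (\<forall>i\<in>I. f i \<in> W i) \<and> x = (\<Sum>i\<in>I. f i)"
    using ds x unfolding internal_direct_sum_def by blast
  from someI_ex[OF this]
  show "\<And>i. i \<in> I \<Longrightarrow> direct_sum_proj I W i x \<in> W i" "x = (\<Sum>i\<in>I. direct_sum_proj I W i x)"
    unfolding direct_sum_proj_def by auto
qed

lemma direct_sum_proj_sum:
  assumes ds: "internal_direct_sum scale M I W" and f: "\<And>i. i \<in> I \<Longrightarrow> f i \<in> W i" and i: "i \<in> I"
  shows "direct_sum_proj I W i (\<Sum>i\<in>I. f i) = f i"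
proof -
  note proj = direct_sum_proj[OF ds internal_direct_sum_sum_mem[OF ds f]]
  show ?thesis
    by (rule internal_direct_sum_unique[OF ds proj(1) f proj(2)[symmetric] i])
qed

lemma direct_sum_proj_summand:
  assumes ds: "internal_direct_sum scale M I W" and "i \<in> I" "j \<in> I" "w \<in> W j"
  shows "direct_sum_proj I W i w = (if i = j then w else 0)"
proof -
  note single = internal_direct_sum_single_sum[OF ds \<open>j \<in> I\<close> \<open>w \<in> W j\<close>]
  from direct_sum_proj_sum[OF ds single(1) \<open>i \<in> I\<close>] show ?thesis unfolding single(2) .
qed

lemma direct_sum_proj_add:
  assumes ds: "internal_direct_sum scale M I W" and "x \<in> M" "y \<in> M" "i \<in> I"
  shows "direct_sum_proj I W i (x + y) = direct_sum_proj I W i x + direct_sum_proj I W i y"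
proof -
  note px = direct_sum_proj[OF ds \<open>x \<in> M\<close>] and py = direct_sum_proj[OF ds \<open>y \<in> M\<close>]
  have "\<And>i. i \<in> I \<Longrightarrow> direct_sum_proj I W i x + direct_sum_proj I W i y \<in> W i"
    using ds px(1) py(1) by (auto simp: internal_direct_sum_def subspace_add)
  from direct_sum_proj_sum[OF ds this \<open>i \<in> I\<close>] show ?thesis
    by (simp add: sum.distrib flip: px(2) py(2))
qed

lemma direct_sum_proj_scale:
  assumes ds: "internal_direct_sum scale M I W" and "x \<in> M" "i \<in> I"
  shows "direct_sum_proj I W i (scale c x) = scale c (direct_sum_proj I W i x)"
proof -
  note px = direct_sum_proj[OF ds \<open>x \<in> M\<close>]
  have "\<And>i. i \<in> I \<Longrightarrow> scale c (direct_sum_proj I W i x) \<in> W i"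
    using ds px(1) by (auto simp: internal_direct_sum_def subspace_scale)
  from direct_sum_proj_sum[OF ds this \<open>i \<in> I\<close>] show ?thesis
    by (simp flip: scale_sum_right px(2))
qed

lemma internal_direct_sum_ideals_mul_zero:
  assumes ds: "internal_direct_sum scale M I W"
    and ideals: "\<And>i. i \<in> I \<Longrightarrow> sub_bimodule scale mul R R (W i)"
    and "i \<in> I" "j \<in> I" "i \<noteq> j" "x \<in> W i" "y \<in> W j"
  shows "mul x y = 0"
proof -
  have "x \<in> R" "y \<in> R" using ideals assms(3-7) by (auto simp: sub_bimodule_def)
  then have "mul x y \<in> W i" "mul x y \<in> W j"
    using ideals assms(3-7) unfolding sub_bimodule_def by blast+
  then show ?thesis using internal_direct_sum_summands_disjoint[OF ds] assms(3-5) by blast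
qed

lemma internal_direct_sum_empty: "internal_direct_sum scale {0} {} W"
  by (simp add: internal_direct_sum_def)

lemma internal_direct_sum_singleton: "subspace (W i) \<Longrightarrow> internal_direct_sum scale (W i) {i} W"
  unfolding internal_direct_sum_def by (auto intro: exI[of _ "\<lambda>_. x" for x])

lemma internal_direct_sum_cong:
  "internal_direct_sum scale M I W \<Longrightarrow> (\<And>i. i \<in> I \<Longrightarrow> W i = W' i) \<Longrightarrow>
   internal_direct_sum scale M I W'"
  unfolding internal_direct_sum_def by auto

lemma internal_direct_sum_union:
  assumes d1: "internal_direct_sum scale M1 I1 W" and d2: "internal_direct_sum scale M2 I2 W"
    and disj: "I1 \<inter> I2 = {}" and int: "M1 \<inter> M2 = {0}"
  shows "internal_direct_sum scale (set_sum M1 M2) (I1 \<union> I2) W"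
proof -
  have fin: "finite I1" "finite I2" using d1 d2 by (auto simp: internal_direct_sum_def)
  have split: "(\<Sum>i\<in>I1 \<union> I2. f i) = (\<Sum>i\<in>I1. f i) + (\<Sum>i\<in>I2. f i)" for f :: "_ \<Rightarrow> 'b"
    using fin disj by (simp add: sum.union_disjoint)
  have "set_sum M1 M2 = {\<Sum>i\<in>I1 \<union> I2. f i |f. \<forall>i\<in>I1 \<union> I2. f i \<in> W i}"
  proof safe
    fix x assume "x \<in> set_sum M1 M2"
    then obtain a b where ab: "x = a + b" "a \<in> M1" "b \<in> M2" by (auto simp: set_sum_def)
    obtain f where f: "\<And>i. i \<in> I1 \<Longrightarrow> f i \<in> W i" "a = (\<Sum>i\<in>I1. f i)"
      using internal_direct_sum_decomp[OF d1 ab(2)] by blast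
    obtain g where g: "\<And>i. i \<in> I2 \<Longrightarrow> g i \<in> W i" "b = (\<Sum>i\<in>I2. g i)"
      using internal_direct_sum_decomp[OF d2 ab(3)] by blast
    let ?h = "\<lambda>i. if i \<in> I1 then f i else g i"
    have "(\<Sum>i\<in>I2. ?h i) = b" unfolding g(2) using disj by (intro sum.cong) auto
    then have "x = (\<Sum>i\<in>I1 \<union> I2. ?h i)" using ab f(2) split by simp
    moreover have "\<forall>i\<in>I1 \<union> I2. ?h i \<in> W i" using f g by auto
    ultimately show "\<exists>f. x = (\<Sum>i\<in>I1 \<union> I2. f i) \<and> (\<forall>i\<in>I1 \<union> I2. f i \<in> W i)" by blast
  next
    fix f assume "\<forall>i\<in>I1 \<union> I2. f i \<in> W i"
    then show "(\<Sum>i\<in>I1 \<union> I2. f i) \<in> set_sum M1 M2"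
      unfolding split set_sum_def
      by (blast intro: internal_direct_sum_sum_mem[OF d1] internal_direct_sum_sum_mem[OF d2])
  qed
  moreover have "\<forall>i\<in>I1 \<union> I2. f i = 0"
    if f: "\<forall>i\<in>I1 \<union> I2. f i \<in> W i" and z: "(\<Sum>i\<in>I1 \<union> I2. f i) = 0" for f
  proof -
    have neg: "\<forall>i\<in>I2. - f i \<in> W i" using f d2 by (auto simp: internal_direct_sum_def subspace_neg)
    have "(\<Sum>i\<in>I1. f i) = (\<Sum>i\<in>I2. - f i)"
      using z split by (simp add: sum_negf eq_neg_iff_add_eq_0)
    moreover have "(\<Sum>i\<in>I1. f i) \<in> M1" "(\<Sum>i\<in>I2. - f i) \<in> M2"
      using f neg by (auto intro: internal_direct_sum_sum_mem[OF d1] internal_direct_sum_sum_mem[OF d2])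
    ultimately have "(\<Sum>i\<in>I1. f i) \<in> M1 \<inter> M2" by simp
    then have "(\<Sum>i\<in>I1. f i) = 0" "(\<Sum>i\<in>I2. f i) = 0" using int z split by auto
    then show ?thesis using f d1 d2 unfolding internal_direct_sum_def by blast
  qed
  ultimately show ?thesis using d1 d2 fin unfolding internal_direct_sum_def by auto
qed

lemma internal_direct_sum_reindex:
  assumes ds: "internal_direct_sum scale M I W" and h: "bij_betw h J I"
  shows "internal_direct_sum scale M J (\<lambda>j. W (h j))"
proof -
  let ?g = "inv_into J h"
  have g: "bij_betw ?g I J" and hg: "\<And>i. i \<in> I \<Longrightarrow> h (?g i) = i"
    using h by (auto simp: bij_betw_inv_into bij_betw_inv_into_right)
  have reindex: "(\<Sum>j\<in>J. f j) = (\<Sum>i\<in>I. f (?g i))" for f :: "_ \<Rightarrow> 'b"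
    by (simp add: sum.reindex_bij_betw[OF g])
  have gh: "\<And>j. j \<in> J \<Longrightarrow> ?g (h j) = j" and hJ: "\<And>j. j \<in> J \<Longrightarrow> h j \<in> I"
    and gI: "\<And>i. i \<in> I \<Longrightarrow> ?g i \<in> J"
    using h g by (auto simp: bij_betw_def)
  have mem: "(\<forall>j\<in>J. f j \<in> W (h j)) \<longleftrightarrow> (\<forall>i\<in>I. f (?g i) \<in> W i)" for f
    by (safe; metis gh hJ gI hg)
  have "M = {\<Sum>j\<in>J. f j |f. \<forall>j\<in>J. f j \<in> W (h j)}"
  proof safe
    fix x assume "x \<in> M"
    then obtain f where f: "\<And>i. i \<in> I \<Longrightarrow> f i \<in> W i" "x = (\<Sum>i\<in>I. f i)"
      using internal_direct_sum_decomp[OF ds] by blast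
    then have "x = (\<Sum>j\<in>J. f (h j))" by (simp add: sum.reindex_bij_betw[OF h])
    moreover have "\<forall>j\<in>J. f (h j) \<in> W (h j)" using f(1) hJ by blast
    ultimately show "\<exists>f. x = (\<Sum>j\<in>J. f j) \<and> (\<forall>j\<in>J. f j \<in> W (h j))" by blast
  next
    fix f assume "\<forall>j\<in>J. f j \<in> W (h j)"
    then show "(\<Sum>j\<in>J. f j) \<in> M"
      unfolding reindex mem by (blast intro: internal_direct_sum_sum_mem[OF ds])
  qed
  moreover have "\<forall>j\<in>J. f j = 0" if "\<forall>j\<in>J. f j \<in> W (h j)" "(\<Sum>j\<in>J. f j) = 0" for f
  proof -
    have "\<forall>i\<in>I. f (?g i) = 0"
      using that internal_direct_sum_independent[OF ds, of "\<lambda>i. f (?g i)"]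
      unfolding reindex mem by blast
    then show ?thesis using gh hJ by metis
  qed
  ultimately show ?thesis
    using ds bij_betw_finite[OF h] hJ unfolding internal_direct_sum_def by auto
qed

end

section \<open>Non-degenerate pairings\<close>

lemma vector_space_field: "vector_space ((*) :: 'k::field \<Rightarrow> 'k \<Rightarrow> 'k)"
  by unfold_locales (simp_all add: algebra_simps)

context finite_dimensional_vector_space
begin

lemma vector_space_pair_field: "vector_space_pair scale ((*) :: 'a \<Rightarrow> 'a \<Rightarrow> 'a)"
  by (simp add: vector_space_pair_def vector_space_axioms vector_space_field)

lemma pairing_coordinate_map:
  fixes P :: "'b \<Rightarrow> 'b \<Rightarrow> 'a"
  assumes lin_right: "\<And>x. Vector_Spaces.linear scale (*) (P x)"
    and lin_left: "\<And>y. Vector_Spaces.linear scale (*) (\<lambda>x. P x y)"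
    and Y: "subspace Y" and nondeg: "\<And>y. y \<in> Y \<Longrightarrow> (\<forall>x\<in>X. P x y = 0) \<Longrightarrow> y = 0"
    and E: "independent E" "X \<subseteq> span E"
  shows "Vector_Spaces.linear scale scale (\<lambda>y. \<Sum>e\<in>E. scale (P e y) e)"
    and "inj_on (\<lambda>y. \<Sum>e\<in>E. scale (P e y) e) Y"
proof -
  have fin: "finite E" using E(1) finiteI_independent by blast
  show lin: "Vector_Spaces.linear scale scale (\<lambda>y. \<Sum>e\<in>E. scale (P e y) e)"
    unfolding linear_iff_module_hom
    by unfold_locales (simp_all add: module_hom.add[OF module_hom_linearI[OF lin_right]]
        module_hom.scale[OF module_hom_linearI[OF lin_right]] scale_left_distrib sum.distrib scale_sum_right)
  have "y = 0" if y: "y \<in> Y" and zero: "(\<Sum>e\<in>E. scale (P e y) e) = 0" for y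
  proof -
    have "\<forall>e\<in>E. P e y = 0"
      using independentD[OF E(1) fin order_refl zero] by blast
    then have "\<forall>x\<in>span E. P x y = 0"
      using module_hom.eq_0_on_span[OF module_hom_linearI[OF lin_left]] by blast
    then show "y = 0" using nondeg y E(2) by blast
  qed
  then show "inj_on (\<lambda>y. \<Sum>e\<in>E. scale (P e y) e) Y"
    using module_hom.inj_on_iff_eq_0[OF module_hom_linearI[OF lin] Y] by blast
qed

lemma pairing_dim_le:
  fixes P :: "'b \<Rightarrow> 'b \<Rightarrow> 'a"
  assumes lin_right: "\<And>x. Vector_Spaces.linear scale (*) (P x)"
    and lin_left: "\<And>y. Vector_Spaces.linear scale (*) (\<lambda>x. P x y)"
    and X: "subspace X" and Y: "subspace Y"
    and nondeg: "\<And>y. y \<in> Y \<Longrightarrow> (\<forall>x\<in>X. P x y = 0) \<Longrightarrow> y = 0"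
  shows "dim Y \<le> dim X"
proof -
  obtain E where E: "E \<subseteq> X" "independent E" "X \<subseteq> span E"
    using basis_exists[of X] by metis
  let ?\<Psi> = "\<lambda>y. \<Sum>e\<in>E. scale (P e y) e"
  note \<Psi> = pairing_coordinate_map[OF lin_right lin_left Y nondeg E(2,3)]
  interpret hom: finite_dimensional_vector_space_pair_1 scale Basis scale by unfold_locales
  have "dim Y = dim (?\<Psi> ` Y)"
    using hom.dim_image_eq[OF \<Psi>(1), of Y] \<Psi>(2) span_eq_iff[THEN iffD2, OF Y] by simp
  also have "\<dots> \<le> dim X"
    using E X by (intro dim_subset) (auto intro!: subspace_sum subspace_scale)
  finally show ?thesis .
qed

lemma pairing_coordinate_map_onto:
  fixes P :: "'b \<Rightarrow> 'b \<Rightarrow> 'a"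
  assumes lin_right: "\<And>x. Vector_Spaces.linear scale (*) (P x)"
    and lin_left: "\<And>y. Vector_Spaces.linear scale (*) (\<lambda>x. P x y)"
    and X: "subspace X" and Y: "subspace Y"
    and nondeg_Y: "\<And>y. y \<in> Y \<Longrightarrow> (\<forall>x\<in>X. P x y = 0) \<Longrightarrow> y = 0"
    and nondeg_X: "\<And>x. x \<in> X \<Longrightarrow> (\<forall>y\<in>Y. P x y = 0) \<Longrightarrow> x = 0"
    and E: "E \<subseteq> X" "independent E" "X \<subseteq> span E"
  shows "(\<lambda>y. \<Sum>e\<in>E. scale (P e y) e) ` Y = X"
proof -
  let ?\<Psi> = "\<lambda>y. \<Sum>e\<in>E. scale (P e y) e"
  note \<Psi> = pairing_coordinate_map[OF lin_right lin_left Y nondeg_Y E(2,3)]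
  interpret hom: finite_dimensional_vector_space_pair_1 scale Basis scale by unfold_locales
  have image_sub: "?\<Psi> ` Y \<subseteq> X"
    using E X by (auto intro!: subspace_sum subspace_scale)
  have "dim X \<le> dim Y"
    by (rule pairing_dim_le[of "\<lambda>y x. P x y"]) (use lin_left lin_right X Y nondeg_X in auto)
  also have "dim Y = dim (?\<Psi> ` Y)"
    using hom.dim_image_eq[OF \<Psi>(1), of Y] \<Psi>(2) span_eq_iff[THEN iffD2, OF Y] by simp
  finally show ?thesis
    using subspace_dim_equal[OF module_hom.subspace_image[OF module_hom_linearI[OF \<Psi>(1)] Y] X image_sub]
    by simp
qed

lemma pairing_represents_functional:
  fixes P :: "'b \<Rightarrow> 'b \<Rightarrow> 'a"
  assumes lin_right: "\<And>x. Vector_Spaces.linear scale (*) (P x)"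
    and lin_left: "\<And>y. Vector_Spaces.linear scale (*) (\<lambda>x. P x y)"
    and X: "subspace X" and Y: "subspace Y"
    and nondeg_Y: "\<And>y. y \<in> Y \<Longrightarrow> (\<forall>x\<in>X. P x y = 0) \<Longrightarrow> y = 0"
    and nondeg_X: "\<And>x. x \<in> X \<Longrightarrow> (\<forall>y\<in>Y. P x y = 0) \<Longrightarrow> x = 0"
    and \<phi>_add: "\<And>x x'. x \<in> X \<Longrightarrow> x' \<in> X \<Longrightarrow> \<phi> (x + x') = \<phi> x + \<phi> x'"
    and \<phi>_scale: "\<And>c x. x \<in> X \<Longrightarrow> \<phi> (scale c x) = c * \<phi> x"
  shows "\<exists>y\<in>Y. \<forall>x\<in>X. P x y = \<phi> x"
proof -
  obtain E where E: "E \<subseteq> X" "independent E" "X \<subseteq> span E"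
    using basis_exists[of X] by metis
  have fin: "finite E" using E(2) finiteI_independent by blast
  have "(\<Sum>e\<in>E. scale (\<phi> e) e) \<in> X"
    using E(1) X by (auto intro!: subspace_sum subspace_scale)
  then have "(\<Sum>e\<in>E. scale (\<phi> e) e) \<in> (\<lambda>y. \<Sum>e\<in>E. scale (P e y) e) ` Y"
    by (simp only: pairing_coordinate_map_onto[OF lin_right lin_left X Y nondeg_Y nondeg_X E])
  then obtain y where y: "y \<in> Y" "(\<Sum>e\<in>E. scale (\<phi> e) e) = (\<Sum>e\<in>E. scale (P e y) e)"
    by (rule imageE)
  then have "(\<Sum>e\<in>E. scale (P e y - \<phi> e) e) = 0"
    by (simp add: scale_left_diff_distrib sum_subtractf)
  from independentD[OF E(2) fin order_refl this]
  have coord: "P e y = \<phi> e" if "e \<in> E" for e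
    using that by simp
  interpret P_y: module_hom scale "(*)" "\<lambda>x. P x y"
    by (rule module_hom_linearI[OF lin_left])
  have "x \<in> X \<and> P x y = \<phi> x" if "x \<in> span E" for x
    using that
  proof (induction rule: span_induct_alt)
    case base
    have "\<phi> 0 = 0" using \<phi>_scale[of 0 0] X by (simp add: subspace_0)
    then show ?case using X by (simp add: subspace_0)
  next
    case (step c e x)
    have e: "e \<in> X" using step.hyps E(1) by blast
    then have "scale c e \<in> X" using X by (simp add: subspace_scale)
    then show ?case
      using step.IH X e coord[OF step.hyps(1)] \<phi>_add \<phi>_scale
      by (simp add: P_y.add P_y.scale subspace_add)
  qed
  then show ?thesis using y(1) E(3) by blast
qed

lemma exists_separating_functional:
  assumes V: "subspace V" and z: "z \<notin> V"
  obtains \<psi> where "Vector_Spaces.linear scale (*) \<psi>" "\<And>v. v \<in> V \<Longrightarrow> \<psi> v = 0" "\<psi> z = 1"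
proof -
  obtain E where E: "E \<subseteq> V" "independent E" "V \<subseteq> span E"
    using basis_exists[of V] by metis
  have "z \<notin> span E" using z span_minimal[OF E(1) V] by blast
  then have "independent (insert z E)" using independent_insertI E(2) by blast
  from vector_space_pair.linear_independent_extend[OF vector_space_pair_field this,
      of "\<lambda>x. if x = z then 1 else 0"]
  obtain \<psi> where \<psi>: "Vector_Spaces.linear scale (*) \<psi>"
      "\<forall>x\<in>insert z E. \<psi> x = (if x = z then 1 else 0)"
    by blast
  interpret \<psi>: module_hom scale "(*)" \<psi> by (rule module_hom_linearI[OF \<psi>(1)])
  have "\<psi> x = 0" if "x \<in> E" for x using \<psi>(2) that z E(1) by auto
  then have "\<psi> v = 0" if "v \<in> V" for v using \<psi>.eq_0_on_span E(3) that by blast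
  moreover have "\<psi> z = 1" using \<psi>(2) by simp
  ultimately show ?thesis using that \<psi>(1) by blast
qed

section \<open>Semisimple bimodules\<close>

lemma exists_irreducible_sub_bimodule:
  assumes C: "sub_bimodule scale mul R M C" and nonzero: "C \<noteq> {0}"
  obtains W where "irreducible_sub_bimodule scale mul R M W" "W \<subseteq> C"
proof -
  let ?Q = "\<lambda>W. sub_bimodule scale mul R M W \<and> W \<subseteq> C \<and> W \<noteq> {0}"
  obtain W where W: "?Q W" and least: "\<And>V. ?Q V \<Longrightarrow> dim W \<le> dim V"
    using ex_has_least_nat[of ?Q C dim] C nonzero by blast
  have "V = {0} \<or> V = W" if V: "sub_bimodule scale mul R W V" for V
  proof (rule disjCI)
    assume "V \<noteq> W"
    have "V \<subseteq> W" "subspace V" "subspace W" using V W by (auto simp: sub_bimodule_def)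
    then have "\<not> dim W \<le> dim V" using subspace_dim_equal \<open>V \<noteq> W\<close> by blast
    moreover have "sub_bimodule scale mul R M V"
      using V W by (auto simp: sub_bimodule_def)
    ultimately show "V = {0}" using least[of V] \<open>V \<subseteq> W\<close> W by blast
  qed
  then show ?thesis using that W by (auto simp: irreducible_sub_bimodule_def)
qed

lemma semisimple_complement_within:
  assumes semisimple: "semisimple_bimodule scale mul R M"
    and C: "sub_bimodule scale mul R M C" and W: "sub_bimodule scale mul R M W" "W \<subseteq> C"
  obtains C' where "sub_bimodule scale mul R M C'" "C' \<subseteq> C" "C' \<inter> W = {0}" "set_sum C' W = C"
proof -
  obtain W' where W': "sub_bimodule scale mul R M W'" "W \<inter> W' = {0}" "set_sum W W' = M"
    using semisimple W(1) unfolding semisimple_bimodule_def by blast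
  have subspaces: "subspace C" "subspace W" "subspace W'"
    using C W(1) W'(1) by (auto simp: sub_bimodule_def)
  have sub: "sub_bimodule scale mul R M (W' \<inter> C)"
    using W'(1) C by (auto simp: sub_bimodule_def subspace_inter)
  have "0 \<in> W' \<inter> C \<inter> W" using subspaces subspace_0 by blast
  then have disjoint: "W' \<inter> C \<inter> W = {0}" using W'(2) by blast
  have split: "set_sum (W' \<inter> C) W = C"
  proof
    show "set_sum (W' \<inter> C) W \<subseteq> C"
      using W(2) subspaces(1) unfolding set_sum_def by (auto intro: subspace_add)
    show "C \<subseteq> set_sum (W' \<inter> C) W"
    proof
      fix c assume "c \<in> C"
      then obtain a b where ab: "a \<in> W" "b \<in> W'" "c = a + b"
        using W'(3) C unfolding set_sum_def sub_bimodule_def by blast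
      then have "b \<in> C" using \<open>c \<in> C\<close> W(2) subspaces(1) subspace_diff[of C c a] by auto
      then show "c \<in> set_sum (W' \<inter> C) W" using ab add.commute unfolding set_sum_def by blast
    qed
  qed
  show ?thesis by (rule that[OF sub Int_lower2 disjoint split])
qed

lemma sub_bimodule_irreducible_decomposition:
  assumes semisimple: "semisimple_bimodule scale mul R M" and C: "sub_bimodule scale mul R M C"
  shows "\<exists>(m::nat) S. (\<forall>k<m. irreducible_sub_bimodule scale mul R M (S k)) \<and>
    internal_direct_sum scale C {..<m} S"
  using C
proof (induction "dim C" arbitrary: C rule: less_induct)
  case less
  show ?case
  proof (cases "C = {0}")
    case True
    then show ?thesis using internal_direct_sum_empty by (intro exI[of _ 0]) auto
  next
    case False
    obtain W where W: "irreducible_sub_bimodule scale mul R M W" "W \<subseteq> C"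
      using exists_irreducible_sub_bimodule[OF less.prems False] by blast
    then have W_sub: "sub_bimodule scale mul R M W" and "W \<noteq> {0}"
      by (auto simp: irreducible_sub_bimodule_def)
    obtain C' where C': "sub_bimodule scale mul R M C'" "C' \<subseteq> C" "C' \<inter> W = {0}" "set_sum C' W = C"
      using semisimple_complement_within[OF semisimple less.prems W_sub W(2)] by blast
    have subspaces: "subspace C" "subspace W" "subspace C'"
      using less.prems W_sub C'(1) by (auto simp: sub_bimodule_def)
    have "dim C' < dim C"
    proof -
      obtain w where "w \<in> W" "w \<noteq> 0" using \<open>W \<noteq> {0}\<close> subspaces(2) subspace_0 by blast
      then have "C' \<subset> C" using W(2) C'(2,3) by blast
      then show ?thesis
        using dim_psubset[of C' C] span_eq_iff[THEN iffD2, OF subspaces(1)]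
          span_eq_iff[THEN iffD2, OF subspaces(3)] by simp
    qed
    then obtain m :: nat and S where S: "\<forall>k<m. irreducible_sub_bimodule scale mul R M (S k)"
        "internal_direct_sum scale C' {..<m} S"
      using less.hyps C'(1) by blast
    have "internal_direct_sum scale C' {..<m} (S(m := W))"
      using internal_direct_sum_cong[OF S(2)] by simp
    moreover have "internal_direct_sum scale W {m} (S(m := W))"
      using internal_direct_sum_singleton[of "S(m := W)" m] subspaces(2) by simp
    ultimately have "internal_direct_sum scale (set_sum C' W) ({..<m} \<union> {m}) (S(m := W))"
      using C'(3) by (intro internal_direct_sum_union) auto
    then have "internal_direct_sum scale C ({..<m} \<union> {m}) (S(m := W))"
      by (simp only: C'(4))
    moreover have "{..<m} \<union> {m} = {..<Suc m}" by auto
    ultimately show ?thesis using S(1) W(1) less_Suc_eq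
      by (intro exI[of _ "Suc m"] exI[of _ "S(m := W)"]) auto
  qed
qed

end

section \<open>Products of subspaces of an associative algebra\<close>

locale assoc_algebra = vector_space scale
  for scale :: "'k::field \<Rightarrow> 'a::ab_group_add \<Rightarrow> 'a" +
  fixes mul :: "'a \<Rightarrow> 'a \<Rightarrow> 'a"
  assumes mul_linear_right: "Vector_Spaces.linear scale scale (mul x)"
    and mul_linear_left: "Vector_Spaces.linear scale scale (\<lambda>x. mul x y)"
    and mul_assoc: "mul (mul x y) z = mul x (mul y z)"
begin

lemma mul_add_right: "mul x (y + z) = mul x y + mul x z"
  by (rule module_hom.add[OF module_hom_linearI[OF mul_linear_right]])

lemma mul_add_left: "mul (x + y) z = mul x z + mul y z"
  by (rule module_hom.add[OF module_hom_linearI[OF mul_linear_left]])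

lemma mul_zero_right [simp]: "mul x 0 = 0"
  by (rule module_hom.zero[OF module_hom_linearI[OF mul_linear_right]])

lemma mul_zero_left [simp]: "mul 0 y = 0"
  by (rule module_hom.zero[OF module_hom_linearI[OF mul_linear_left]])

lemma mul_mem_set_prod: "x \<in> X \<Longrightarrow> y \<in> Y \<Longrightarrow> mul x y \<in> set_prod scale mul X Y"
  unfolding set_prod_def by (blast intro: span_base)

lemma subspace_set_prod: "subspace (set_prod scale mul X Y)"
  unfolding set_prod_def by simp

lemma set_prod_subset:
  "subspace U \<Longrightarrow> (\<And>x y. x \<in> X \<Longrightarrow> y \<in> Y \<Longrightarrow> mul x y \<in> U) \<Longrightarrow> set_prod scale mul X Y \<subseteq> U"
  unfolding set_prod_def by (rule span_minimal) blast+

lemma set_prod_eq_0_iff: "set_prod scale mul X Y = {0} \<longleftrightarrow> (\<forall>x\<in>X. \<forall>y\<in>Y. mul x y = 0)"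
  using set_prod_subset[OF subspace_single_0, of X Y] mul_mem_set_prod[of _ X _ Y]
    subspace_0[OF subspace_set_prod] by blast

lemma mul_left_set_prod:
  assumes "subspace U" and "\<And>x y. x \<in> X \<Longrightarrow> y \<in> Y \<Longrightarrow> mul a (mul x y) \<in> U"
    and "v \<in> set_prod scale mul X Y"
  shows "mul a v \<in> U"
  using set_prod_subset[of "mul a -` U" X Y]
    module_hom.subspace_vimage[OF module_hom_linearI[OF mul_linear_right] assms(1)] assms(2,3)
  by blast

lemma mul_right_set_prod:
  assumes "subspace U" and "\<And>x y. x \<in> X \<Longrightarrow> y \<in> Y \<Longrightarrow> mul (mul x y) a \<in> U"
    and "v \<in> set_prod scale mul X Y"
  shows "mul v a \<in> U"
  using set_prod_subset[of "(\<lambda>v. mul v a) -` U" X Y]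
    module_hom.subspace_vimage[OF module_hom_linearI[OF mul_linear_left] assms(1)] assms(2,3)
  by blast

lemma sub_bimodule_set_prod:
  assumes left: "\<And>a x. a \<in> R \<Longrightarrow> x \<in> X \<Longrightarrow> mul a x \<in> X"
    and right: "\<And>a y. a \<in> R \<Longrightarrow> y \<in> Y \<Longrightarrow> mul y a \<in> Y"
    and "set_prod scale mul X Y \<subseteq> M"
  shows "sub_bimodule scale mul R M (set_prod scale mul X Y)"
  unfolding sub_bimodule_def
proof (intro conjI ballI subspace_set_prod assms(3))
  fix a v assume a: "a \<in> R" and v: "v \<in> set_prod scale mul X Y"
  show "mul a v \<in> set_prod scale mul X Y"
  proof (rule mul_left_set_prod[OF subspace_set_prod _ v])
    fix x y assume "x \<in> X" "y \<in> Y"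
    then show "mul a (mul x y) \<in> set_prod scale mul X Y"
      using left[OF a] by (simp add: mul_mem_set_prod flip: mul_assoc)
  qed
  show "mul v a \<in> set_prod scale mul X Y"
  proof (rule mul_right_set_prod[OF subspace_set_prod _ v])
    fix x y assume "x \<in> X" "y \<in> Y"
    then show "mul (mul x y) a \<in> set_prod scale mul X Y"
      using right[OF a] by (simp add: mul_mem_set_prod mul_assoc)
  qed
qed

end

section \<open>Odd-symmetric superalgebras\<close>

locale odd_symmetric_superalgebra = finite_dimensional_vector_space scale basis
  for scale :: "'k::field \<Rightarrow> 'a::ab_group_add \<Rightarrow> 'a" and basis +
  fixes mul :: "'a \<Rightarrow> 'a \<Rightarrow> 'a" and A0 A1 :: "'a set" and B :: "'a \<Rightarrow> 'a \<Rightarrow> 'k"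
  assumes superalgebra: "fd_assoc_superalgebra scale mul A0 A1"
    and odd_symmetric: "odd_symmetric_structure scale mul A0 A1 B"
begin

sublocale assoc_algebra scale mul
  by (rule assoc_algebra.intro[OF vector_space_axioms assoc_algebra_axioms.intro])
    (use superalgebra in \<open>simp_all add: fd_assoc_superalgebra_def\<close>)

lemma subspace_A0: "subspace A0"
  and subspace_A1: "subspace A1"
  and A0_inter_A1: "A0 \<inter> A1 = {0}"
  and set_sum_A0_A1: "set_sum A0 A1 = UNIV"
  and mul_A0_A0: "x \<in> A0 \<Longrightarrow> y \<in> A0 \<Longrightarrow> mul x y \<in> A0"
  and mul_A0_A1: "x \<in> A0 \<Longrightarrow> y \<in> A1 \<Longrightarrow> mul x y \<in> A1"
  and mul_A1_A0: "x \<in> A1 \<Longrightarrow> y \<in> A0 \<Longrightarrow> mul x y \<in> A1"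
  and mul_A1_A1: "x \<in> A1 \<Longrightarrow> y \<in> A1 \<Longrightarrow> mul x y \<in> A0"
  using superalgebra by (simp_all add: fd_assoc_superalgebra_def)

lemma B_linear_right: "Vector_Spaces.linear scale (*) (B x)"
  and B_linear_left: "Vector_Spaces.linear scale (*) (\<lambda>x. B x y)"
  and B_A0_A0: "x \<in> A0 \<Longrightarrow> y \<in> A0 \<Longrightarrow> B x y = 0"
  and B_A1_A1: "x \<in> A1 \<Longrightarrow> y \<in> A1 \<Longrightarrow> B x y = 0"
  and B_commute: "x \<in> A0 \<Longrightarrow> y \<in> A1 \<Longrightarrow> B x y = B y x"
  and B_assoc: "B (mul x y) z = B x (mul y z)"
  and B_nondegenerate_left: "(\<And>y. B x y = 0) \<Longrightarrow> x = 0"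
  and B_nondegenerate_right: "(\<And>x. B x y = 0) \<Longrightarrow> y = 0"
  using odd_symmetric by (simp_all add: odd_symmetric_structure_def)

lemma B_add_left: "B (x + x') y = B x y + B x' y"
  by (rule module_hom.add[OF module_hom_linearI[OF B_linear_left]])

lemma B_scale_left: "B (scale c x) y = c * B x y"
  by (rule module_hom.scale[OF module_hom_linearI[OF B_linear_left]])

lemma B_sum_left: "B (sum f I) y = (\<Sum>i\<in>I. B (f i) y)"
  by (rule module_hom.sum[OF module_hom_linearI[OF B_linear_left]])

lemma B_zero_left [simp]: "B 0 y = 0"
  by (rule module_hom.zero[OF module_hom_linearI[OF B_linear_left]])

lemma B_add_right: "B x (y + y') = B x y + B x y'"
  by (rule module_hom.add[OF module_hom_linearI[OF B_linear_right]])

lemma B_scale_right: "B x (scale c y) = c * B x y"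
  by (rule module_hom.scale[OF module_hom_linearI[OF B_linear_right]])

lemma B_sum_right: "B x (sum f I) = (\<Sum>i\<in>I. B x (f i))"
  by (rule module_hom.sum[OF module_hom_linearI[OF B_linear_right]])

lemma B_zero_right [simp]: "B x 0 = 0"
  by (rule module_hom.zero[OF module_hom_linearI[OF B_linear_right]])

lemma B_diff_right: "B x (y - y') = B x y - B x y'"
  by (rule module_hom.diff[OF module_hom_linearI[OF B_linear_right]])

lemma B_mul_odd_even:
  assumes "x \<in> A0" "y \<in> A1" "a \<in> A0"
  shows "B x (mul y a) = B (mul a x) y"
proof -
  have "B x (mul y a) = B (mul y a) x" using B_commute[OF assms(1) mul_A1_A0[OF assms(2,3)]] .
  also have "\<dots> = B y (mul a x)" by (rule B_assoc)
  also have "\<dots> = B (mul a x) y" using B_commute[OF mul_A0_A0[OF assms(3,1)] assms(2)] by simp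
  finally show ?thesis .
qed

lemma odd_eq_0_if_orthogonal:
  assumes y: "y \<in> A1" and orth: "\<And>x. x \<in> A0 \<Longrightarrow> B x y = 0"
  shows "y = 0"
proof (rule B_nondegenerate_right)
  fix x
  obtain x0 x1 where "x0 \<in> A0" "x1 \<in> A1" "x = x0 + x1"
    using set_sum_A0_A1 unfolding set_sum_def by blast
  then show "B x y = 0" using y orth B_A1_A1 by (simp add: B_add_left)
qed

lemma even_eq_0_if_orthogonal:
  assumes x: "x \<in> A0" and orth: "\<And>y. y \<in> A1 \<Longrightarrow> B x y = 0"
  shows "x = 0"
proof (rule B_nondegenerate_left)
  fix y
  obtain y0 y1 where "y0 \<in> A0" "y1 \<in> A1" "y = y0 + y1"
    using set_sum_A0_A1 unfolding set_sum_def by blast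
  then show "B x y = 0" using x orth B_A0_A0 by (simp add: B_add_right)
qed

lemma even_represents_functional:
  assumes \<psi>: "Vector_Spaces.linear scale (*) \<psi>"
  obtains x where "x \<in> A0" "\<And>y. y \<in> A1 \<Longrightarrow> B x y = \<psi> y"
proof -
  interpret \<psi>: module_hom scale "(*)" \<psi> by (rule module_hom_linearI[OF \<psi>])
  have "\<exists>x\<in>A0. \<forall>y\<in>A1. B x y = \<psi> y"
    by (rule pairing_represents_functional[of "\<lambda>y x. B x y"])
      (use B_linear_left B_linear_right subspace_A0 subspace_A1 odd_eq_0_if_orthogonal
        even_eq_0_if_orthogonal \<psi>.add \<psi>.scale in auto)
  then show ?thesis using that by blast
qed

lemma Ann_sub_bimodule: "sub_bimodule scale mul A0 A0 (Ann mul A0)"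
proof -
  have "subspace (Ann mul A0)"
    using subspace_A0 unfolding subspace_def Ann_def
    by (auto simp: mul_add_left mul_add_right
        module_hom.scale[OF module_hom_linearI[OF mul_linear_left]]
        module_hom.scale[OF module_hom_linearI[OF mul_linear_right]])
  then show ?thesis using subspace_0[OF subspace_A0] by (auto simp: sub_bimodule_def Ann_def)
qed

text \<open>B x (a y) = B (x a) y and B x (y a) = B (a x) y vanish for all even x.\<close>
lemma Ann_mul_odd:
  assumes a: "a \<in> Ann mul A0" and y: "y \<in> A1"
  shows "mul a y = 0" "mul y a = 0"
proof -
  have a0: "a \<in> A0" and ann: "\<And>x. x \<in> A0 \<Longrightarrow> mul x a = 0 \<and> mul a x = 0"
    using a by (auto simp: Ann_def)
  show "mul a y = 0"
    by (rule odd_eq_0_if_orthogonal) (use a0 y ann mul_A0_A1 in \<open>auto simp flip: B_assoc\<close>)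
  show "mul y a = 0"
    by (rule odd_eq_0_if_orthogonal) (use a0 y ann mul_A1_A0 B_mul_odd_even in auto)
qed

definition orthogonal_summand :: "'i set \<Rightarrow> ('i \<Rightarrow> 'a set) \<Rightarrow> 'i \<Rightarrow> 'a set" where
  "orthogonal_summand I W k = {y \<in> A1. \<forall>l\<in>I. l \<noteq> k \<longrightarrow> (\<forall>x\<in>W l. B x y = 0)}"

lemma orthogonal_summand_orthogonal:
  "y \<in> orthogonal_summand I W k \<Longrightarrow> l \<in> I \<Longrightarrow> l \<noteq> k \<Longrightarrow> x \<in> W l \<Longrightarrow> B x y = 0"
  by (auto simp: orthogonal_summand_def)

lemma orthogonal_summand_subset: "orthogonal_summand I W k \<subseteq> A1"
  by (auto simp: orthogonal_summand_def)

lemma subspace_orthogonal_summand: "subspace (orthogonal_summand I W k)"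
  using subspace_A1 unfolding subspace_def orthogonal_summand_def
  by (auto simp: B_add_right B_scale_right)

lemma B_orthogonal_summand_proj:
  assumes ds: "internal_direct_sum scale A0 I W" and "x \<in> A0" "k \<in> I"
    and y: "y \<in> orthogonal_summand I W k"
  shows "B x y = B (direct_sum_proj I W k x) y"
proof -
  note proj = direct_sum_proj[OF ds \<open>x \<in> A0\<close>]
  have "B x y = (\<Sum>l\<in>I. B (direct_sum_proj I W l x) y)"
    by (subst proj(2)) (simp add: B_sum_left)
  also have "\<dots> = (\<Sum>l\<in>I. if l = k then B (direct_sum_proj I W k x) y else 0)"
    using orthogonal_summand_orthogonal[OF y] proj(1) by (intro sum.cong) auto
  also have "\<dots> = B (direct_sum_proj I W k x) y"
    using \<open>k \<in> I\<close> ds by (simp add: internal_direct_sum_def)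
  finally show ?thesis .
qed

lemma orthogonal_summands_independent:
  assumes ds: "internal_direct_sum scale A0 I W"
    and g: "\<And>k. k \<in> I \<Longrightarrow> g k \<in> orthogonal_summand I W k"
    and zero: "(\<Sum>k\<in>I. g k) = 0" and i: "i \<in> I"
  shows "g i = 0"
proof (rule odd_eq_0_if_orthogonal)
  show "g i \<in> A1" using g[OF i] by (simp add: orthogonal_summand_def)
  fix x assume "x \<in> A0"
  let ?p = "direct_sum_proj I W i x"
  have p: "?p \<in> W i" using direct_sum_proj(1)[OF ds \<open>x \<in> A0\<close> i] .
  have "B x (g i) = B ?p (g i)" by (rule B_orthogonal_summand_proj[OF ds \<open>x \<in> A0\<close> i g[OF i]])
  also have "\<dots> = (\<Sum>k\<in>I. if k = i then B ?p (g i) else 0)"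
    using i ds by (simp add: internal_direct_sum_def)
  also have "\<dots> = (\<Sum>k\<in>I. B ?p (g k))"
    using orthogonal_summand_orthogonal[OF g i _ p] by (intro sum.cong) auto
  also have "\<dots> = 0" using zero by (simp flip: B_sum_right)
  finally show "B x (g i) = 0" .
qed

text \<open>The k-th component of an odd element y is the element of A1 representing the functional
  x \<mapsto> B (proj k x) y.\<close>
lemma orthogonal_summands_span:
  assumes ds: "internal_direct_sum scale A0 I W" and y: "y \<in> A1"
  shows "y \<in> {\<Sum>k\<in>I. g k |g. \<forall>k\<in>I. g k \<in> orthogonal_summand I W k}"
proof -
  have "\<exists>z\<in>A1. \<forall>x\<in>A0. B x z = B (direct_sum_proj I W k x) y" if k: "k \<in> I" for k
    by (rule pairing_represents_functional[OF B_linear_right B_linear_left subspace_A0 subspace_A1])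
      (use odd_eq_0_if_orthogonal even_eq_0_if_orthogonal direct_sum_proj_add[OF ds _ _ k]
        direct_sum_proj_scale[OF ds _ k] in \<open>auto simp: B_add_left B_scale_left\<close>)
  then obtain g where g_A1: "\<And>k. k \<in> I \<Longrightarrow> g k \<in> A1"
    and g: "\<And>k x. k \<in> I \<Longrightarrow> x \<in> A0 \<Longrightarrow> B x (g k) = B (direct_sum_proj I W k x) y"
    by metis
  have "g k \<in> orthogonal_summand I W k" if k: "k \<in> I" for k
    unfolding orthogonal_summand_def
  proof (intro CollectI conjI ballI impI g_A1[OF k])
    fix l x assume "l \<in> I" "l \<noteq> k" "x \<in> W l"
    moreover from this have "x \<in> A0" using internal_direct_sum_summand_subset[OF ds] by blast
    ultimately show "B x (g k) = 0" using g[OF k] direct_sum_proj_summand[OF ds k] by simp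
  qed
  moreover have "(\<Sum>k\<in>I. g k) - y = 0"
  proof (rule odd_eq_0_if_orthogonal)
    show "(\<Sum>k\<in>I. g k) - y \<in> A1" using g_A1 y subspace_A1 by (auto intro!: subspace_diff subspace_sum)
    fix x assume x: "x \<in> A0"
    have "B x (\<Sum>k\<in>I. g k) = B (\<Sum>k\<in>I. direct_sum_proj I W k x) y"
      using g x by (simp add: B_sum_left B_sum_right)
    then show "B x ((\<Sum>k\<in>I. g k) - y) = 0"
      using direct_sum_proj(2)[OF ds x] by (simp add: B_diff_right)
  qed
  then have "y = (\<Sum>k\<in>I. g k)" by (simp add: eq_iff_diff_eq_0[symmetric])
  ultimately show ?thesis by blast
qed

lemma internal_direct_sum_orthogonal_summands:
  assumes ds: "internal_direct_sum scale A0 I W"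
  shows "internal_direct_sum scale A1 I (orthogonal_summand I W)"
  unfolding internal_direct_sum_def
proof (intro conjI ballI allI impI)
  show "finite I" using ds by (simp add: internal_direct_sum_def)
  show "subspace (orthogonal_summand I W k)" for k by (rule subspace_orthogonal_summand)
  show "A1 = {\<Sum>k\<in>I. g k |g. \<forall>k\<in>I. g k \<in> orthogonal_summand I W k}"
  proof
    show "A1 \<subseteq> {\<Sum>k\<in>I. g k |g. \<forall>k\<in>I. g k \<in> orthogonal_summand I W k}"
      by (intro subsetI orthogonal_summands_span[OF ds])
    show "{\<Sum>k\<in>I. g k |g. \<forall>k\<in>I. g k \<in> orthogonal_summand I W k} \<subseteq> A1"
      using subspace_A1 by (auto intro!: subspace_sum simp: orthogonal_summand_def)
  qed
  fix g k assume "(\<forall>k\<in>I. g k \<in> orthogonal_summand I W k) \<and> (\<Sum>k\<in>I. g k) = 0" "k \<in> I"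
  then show "g k = 0" using orthogonal_summands_independent[OF ds] by blast
qed

end


section \<open>The decomposition\<close>

locale graded_decomposition = odd_symmetric_superalgebra scale basis mul A0 A1 B
  for scale :: "'k::field \<Rightarrow> 'a::ab_group_add \<Rightarrow> 'a" and basis mul A0 A1 B +
  fixes n :: nat and S :: "nat \<Rightarrow> 'a set"
  assumes internal_direct_sum_A0:
      "internal_direct_sum scale A0 {..n} (\<lambda>k. if k < n then S k else Ann mul A0)"
    and irreducible_S: "\<And>k. k < n \<Longrightarrow> irreducible_sub_bimodule scale mul A0 A0 (S k)"
begin

text \<open>Index n stands for N = Ann(A0); the odd summand k is the paper's hatted S_k for k < n and
  its hatted N for k = n.\<close>
definition even_summand :: "nat \<Rightarrow> 'a set" where
  "even_summand k = (if k < n then S k else Ann mul A0)"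

definition odd_summand :: "nat \<Rightarrow> 'a set" where
  "odd_summand = orthogonal_summand {..n} even_summand"

abbreviation even_proj :: "nat \<Rightarrow> 'a \<Rightarrow> 'a" where
  "even_proj \<equiv> direct_sum_proj {..n} even_summand"

lemma internal_direct_sum_even_summand: "internal_direct_sum scale A0 {..n} even_summand"
  using internal_direct_sum_A0 by (simp add: even_summand_def[abs_def])

lemma internal_direct_sum_odd_summand: "internal_direct_sum scale A1 {..n} odd_summand"
  unfolding odd_summand_def
  by (rule internal_direct_sum_orthogonal_summands[OF internal_direct_sum_even_summand])

lemma even_summand_ideal: "k \<le> n \<Longrightarrow> sub_bimodule scale mul A0 A0 (even_summand k)"
  using irreducible_S Ann_sub_bimodule by (auto simp: even_summand_def irreducible_sub_bimodule_def)

lemma even_summand_mul_closed: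
  assumes "k \<le> n" "a \<in> A0" "x \<in> even_summand k"
  shows "mul a x \<in> even_summand k" "mul x a \<in> even_summand k"
  using even_summand_ideal[OF assms(1)] assms(2,3) by (auto simp: sub_bimodule_def)

lemma S_eq_even_summand: "k < n \<Longrightarrow> S k = even_summand k"
  by (simp add: even_summand_def)

lemma S_subset_A0: "k < n \<Longrightarrow> S k \<subseteq> A0"
  using even_summand_ideal[of k] by (auto simp: S_eq_even_summand sub_bimodule_def)

lemma subspace_S: "k < n \<Longrightarrow> subspace (S k)"
  using even_summand_ideal[of k] by (auto simp: S_eq_even_summand sub_bimodule_def)

lemma even_proj_mem: "x \<in> A0 \<Longrightarrow> k \<le> n \<Longrightarrow> even_proj k x \<in> even_summand k"
  using direct_sum_proj(1)[OF internal_direct_sum_even_summand] by simp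

lemma mul_even_proj:
  assumes "a \<in> A0" "k \<le> n" "x \<in> even_summand k"
  shows "mul a x = mul (even_proj k a) x" "mul x a = mul x (even_proj k a)"
proof -
  note ds = internal_direct_sum_even_summand
  have zero: "mul (even_proj l a) x = 0" "mul x (even_proj l a) = 0" if "l \<le> n" "l \<noteq> k" for l
    using internal_direct_sum_ideals_mul_zero[OF ds even_summand_ideal] even_proj_mem assms that
    by auto
  have "mul a x = (\<Sum>l\<le>n. mul (even_proj l a) x)"
    by (subst direct_sum_proj(2)[OF ds \<open>a \<in> A0\<close>]) (simp add: module_hom.sum[OF
        module_hom_linearI[OF mul_linear_left]])
  also have "\<dots> = mul (even_proj k a) x"
    using zero(1) \<open>k \<le> n\<close> by (subst sum.remove[of _ k]) (auto intro: sum.neutral)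
  finally show "mul a x = mul (even_proj k a) x" .
  have "mul x a = (\<Sum>l\<le>n. mul x (even_proj l a))"
    by (subst direct_sum_proj(2)[OF ds \<open>a \<in> A0\<close>]) (simp add: module_hom.sum[OF
        module_hom_linearI[OF mul_linear_right]])
  also have "\<dots> = mul x (even_proj k a)"
    using zero(2) \<open>k \<le> n\<close> by (subst sum.remove[of _ k]) (auto intro: sum.neutral)
  finally show "mul x a = mul x (even_proj k a)" .
qed

lemma odd_summand_subset_A1: "odd_summand k \<subseteq> A1"
  unfolding odd_summand_def by (rule orthogonal_summand_subset)

lemma subspace_odd_summand: "subspace (odd_summand k)"
  unfolding odd_summand_def by (rule subspace_orthogonal_summand)

lemma odd_summand_orthogonal:
  "y \<in> odd_summand k \<Longrightarrow> l \<le> n \<Longrightarrow> l \<noteq> k \<Longrightarrow> x \<in> even_summand l \<Longrightarrow> B x y = 0"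
  by (auto simp: odd_summand_def orthogonal_summand_def)

lemma odd_summandI:
  "y \<in> A1 \<Longrightarrow> (\<And>l x. l \<le> n \<Longrightarrow> l \<noteq> k \<Longrightarrow> x \<in> even_summand l \<Longrightarrow> B x y = 0) \<Longrightarrow>
   y \<in> odd_summand k"
  by (auto simp: odd_summand_def orthogonal_summand_def)

lemma B_even_proj:
  "x \<in> A0 \<Longrightarrow> k \<le> n \<Longrightarrow> y \<in> odd_summand k \<Longrightarrow> B x y = B (even_proj k x) y"
  unfolding odd_summand_def
  by (rule B_orthogonal_summand_proj[OF internal_direct_sum_even_summand]) auto

lemma odd_summand_sub_bimodule: "sub_bimodule scale mul A0 A1 (odd_summand k)"
  unfolding sub_bimodule_def
proof (intro conjI ballI subspace_odd_summand odd_summand_subset_A1)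
  fix a y assume a: "a \<in> A0" and y: "y \<in> odd_summand k"
  have y1: "y \<in> A1" using y odd_summand_subset_A1 by blast
  show "mul a y \<in> odd_summand k"
  proof (rule odd_summandI)
    fix l x assume "l \<le> n" "l \<noteq> k" "x \<in> even_summand l"
    then show "B x (mul a y) = 0"
      using odd_summand_orthogonal[OF y] even_summand_mul_closed(2) a by (simp flip: B_assoc)
  qed (use a y1 mul_A0_A1 in blast)
  show "mul y a \<in> odd_summand k"
  proof (rule odd_summandI)
    fix l x assume "l \<le> n" "l \<noteq> k" "x \<in> even_summand l"
    moreover from this have "x \<in> A0" using even_summand_ideal by (auto simp: sub_bimodule_def)
    ultimately show "B x (mul y a) = 0"
      using odd_summand_orthogonal[OF y] even_summand_mul_closed(1) a y1 B_mul_odd_even by simp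
  qed (use a y1 mul_A1_A0 in blast)
qed

lemma odd_summand_mul_closed:
  "a \<in> A0 \<Longrightarrow> y \<in> odd_summand k \<Longrightarrow> mul a y \<in> odd_summand k"
  "a \<in> A0 \<Longrightarrow> y \<in> odd_summand k \<Longrightarrow> mul y a \<in> odd_summand k"
  using odd_summand_sub_bimodule by (auto simp: sub_bimodule_def)

lemma S_mul_closed:
  "k < n \<Longrightarrow> a \<in> A0 \<Longrightarrow> s \<in> S k \<Longrightarrow> mul a s \<in> S k"
  "k < n \<Longrightarrow> a \<in> A0 \<Longrightarrow> s \<in> S k \<Longrightarrow> mul s a \<in> S k"
  using even_summand_mul_closed[of k a s] by (simp_all add: S_eq_even_summand)

lemma even_odd_mul_zero:
  assumes "l \<le> n" "l \<noteq> k" "a \<in> even_summand l" "y \<in> odd_summand k"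
  shows "mul a y = 0" "mul y a = 0"
proof -
  have a0: "a \<in> A0" using even_summand_ideal assms(1,3) by (auto simp: sub_bimodule_def)
  have y1: "y \<in> A1" using assms(4) odd_summand_subset_A1 by blast
  show "mul a y = 0"
    by (rule odd_eq_0_if_orthogonal)
      (use a0 y1 mul_A0_A1 odd_summand_orthogonal[OF assms(4,1,2)] even_summand_mul_closed(1)[OF assms(1) _ assms(3)]
        in \<open>auto simp flip: B_assoc\<close>)
  show "mul y a = 0"
    by (rule odd_eq_0_if_orthogonal)
      (use a0 y1 mul_A1_A0 B_mul_odd_even odd_summand_orthogonal[OF assms(4,1,2)]
        even_summand_mul_closed(2)[OF assms(1) _ assms(3)] in auto)
qed

lemma last_odd_summand_mul_zero:
  assumes y: "y \<in> odd_summand n" and a: "a \<in> A0"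
  shows "mul a y = 0" "mul y a = 0"
proof -
  have y1: "y \<in> A1" using y odd_summand_subset_A1 by blast
  have zero: "mul w y = 0 \<and> mul y w = 0" if "l \<in> {..n}" "w \<in> even_summand l" for l w
  proof (cases "l = n")
    case True
    then show ?thesis using Ann_mul_odd[OF _ y1] that by (simp add: even_summand_def)
  next
    case False
    then show ?thesis using even_odd_mul_zero[OF _ False _ y] that by auto
  qed
  show "mul a y = 0"
    using internal_direct_sum_additive_eq_0[OF internal_direct_sum_even_summand a, of "\<lambda>a. mul a y"]
      mul_add_left zero by blast
  show "mul y a = 0"
    using internal_direct_sum_additive_eq_0[OF internal_direct_sum_even_summand a, of "\<lambda>a. mul y a"]
      mul_add_right zero by blast
qed

text \<open>An ideal of the algebra S k is already an A0-bimodule, since the other summands of A0 act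
  on S k by zero.\<close>
lemma ideal_of_S_trivial:
  assumes k: "k < n" and J: "sub_bimodule scale mul (S k) (S k) J"
  shows "J = {0} \<or> J = S k"
proof -
  have "sub_bimodule scale mul A0 (S k) J"
    unfolding sub_bimodule_def
  proof (intro conjI ballI)
    show "subspace J" "J \<subseteq> S k" using J by (auto simp: sub_bimodule_def)
    fix a j assume "a \<in> A0" "j \<in> J"
    moreover have "even_proj k a \<in> S k" using even_proj_mem \<open>a \<in> A0\<close> k by (simp add: S_eq_even_summand)
    moreover have "j \<in> even_summand k" using J \<open>j \<in> J\<close> k by (auto simp: sub_bimodule_def S_eq_even_summand)
    ultimately show "mul a j \<in> J" "mul j a \<in> J"
      using mul_even_proj[of a k j] J k by (auto simp: sub_bimodule_def)
  qed
  then show ?thesis using irreducible_S[OF k] unfolding irreducible_sub_bimodule_def by blast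
qed

lemma S_nonzero: "k < n \<Longrightarrow> S k \<noteq> {0}"
  using irreducible_S by (simp add: irreducible_sub_bimodule_def)

lemma S_simple: "k < n \<Longrightarrow> simple_ideal scale mul A0 (S k)"
  unfolding simple_ideal_def
proof (intro conjI allI impI)
  assume k: "k < n"
  show "sub_bimodule scale mul A0 A0 (S k)" using even_summand_ideal k by (simp add: S_eq_even_summand)
  show "J = {0} \<or> J = S k" if "sub_bimodule scale mul (S k) (S k) J" for J
    using ideal_of_S_trivial[OF k that] .
  show "set_prod scale mul (S k) (S k) \<noteq> {0}"
  proof
    assume "set_prod scale mul (S k) (S k) = {0}"
    then have zero: "mul x y = 0" if "x \<in> S k" "y \<in> S k" for x y
      using that set_prod_eq_0_iff by blast
    have "x \<in> Ann mul A0" if x: "x \<in> S k" for x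
      using mul_even_proj[of _ k x] even_proj_mem zero x S_subset_A0[OF k] k
      by (auto simp: Ann_def S_eq_even_summand)
    then have "S k \<subseteq> even_summand k \<inter> even_summand n"
      using k by (auto simp: even_summand_def)
    then have "S k \<subseteq> {0}"
      using internal_direct_sum_summands_disjoint[OF internal_direct_sum_even_summand, of k n] k by auto
    then show False using S_nonzero[OF k] subspace_S[OF k] subspace_0 by blast
  qed
qed

lemma S_square: "k < n \<Longrightarrow> set_prod scale mul (S k) (S k) = S k"
proof -
  assume k: "k < n"
  have S_mul: "mul a x \<in> S k" "mul x a \<in> S k" if "a \<in> S k" "x \<in> S k" for a x
    using even_summand_mul_closed[of k a x] S_subset_A0[OF k] that k by (auto simp: S_eq_even_summand)
  have "set_prod scale mul (S k) (S k) \<subseteq> S k"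
    by (rule set_prod_subset[OF subspace_S[OF k] S_mul(1)])
  then have "sub_bimodule scale mul (S k) (S k) (set_prod scale mul (S k) (S k))"
    using S_mul by (intro sub_bimodule_set_prod)
  then show ?thesis
    using ideal_of_S_trivial[OF k] S_simple[OF k] by (auto simp: simple_ideal_def)
qed

lemma odd_summand_nonzero: "k < n \<Longrightarrow> odd_summand k \<noteq> {0}"
proof
  assume k: "k < n" and zero: "odd_summand k = {0}"
  obtain s where s: "s \<in> S k" "s \<noteq> 0" using S_nonzero[OF k] subspace_S[OF k] subspace_0 by blast
  have "B s y = 0" if y: "y \<in> A1" for y
  proof (rule internal_direct_sum_additive_eq_0[OF internal_direct_sum_odd_summand y])
    show "B s (a + b) = B s a + B s b" for a b by (rule B_add_right)
    fix l w assume "l \<in> {..n}" "w \<in> odd_summand l"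
    then show "B s w = 0"
      using odd_summand_orthogonal[of w l k s] zero s k by (cases "l = k") (auto simp: S_eq_even_summand)
  qed
  then show False using even_eq_0_if_orthogonal s S_subset_A0[OF k] by blast
qed

lemma odd_summand_eq_0_if_orthogonal:
  assumes k: "k < n" and z: "z \<in> odd_summand k" and orth: "\<And>s. s \<in> S k \<Longrightarrow> B s z = 0"
  shows "z = 0"
proof (rule odd_eq_0_if_orthogonal)
  show "z \<in> A1" using z odd_summand_subset_A1 by blast
  fix x assume "x \<in> A0"
  then have "even_proj k x \<in> S k" using even_proj_mem k by (simp add: S_eq_even_summand)
  then show "B x z = 0" using B_even_proj[OF \<open>x \<in> A0\<close> _ z] orth k by simp
qed

lemma B_S_eq_0_if_products:
  assumes k: "k < n" and orth: "\<And>s s'. s \<in> S k \<Longrightarrow> s' \<in> S k \<Longrightarrow> B (mul s s') z = 0"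
    and s: "s \<in> S k"
  shows "B s z = 0"
proof -
  have "subspace {x. B x z = 0}"
    by (rule module_hom.subspace_kernel[OF module_hom_linearI[OF B_linear_left]])
  then have "set_prod scale mul (S k) (S k) \<subseteq> {x. B x z = 0}"
    using orth by (intro set_prod_subset) auto
  then show ?thesis using S_square[OF k] s by blast
qed

lemma S_orthogonal_ideal:
  assumes k: "k < n" and V: "V \<subseteq> A1" "\<And>a v. a \<in> A0 \<Longrightarrow> v \<in> V \<Longrightarrow> mul a v \<in> V \<and> mul v a \<in> V"
  shows "sub_bimodule scale mul (S k) (S k) {s \<in> S k. \<forall>v\<in>V. B s v = 0}"
  unfolding sub_bimodule_def
proof (intro conjI ballI)
  show "subspace {s \<in> S k. \<forall>v\<in>V. B s v = 0}"
    using subspace_S[OF k] unfolding subspace_def by (auto simp: B_add_left B_scale_left)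
  show "{s \<in> S k. \<forall>v\<in>V. B s v = 0} \<subseteq> S k" by blast
  fix t s assume t: "t \<in> S k" and s: "s \<in> {s \<in> S k. \<forall>v\<in>V. B s v = 0}"
  have t0: "t \<in> A0" and s0: "s \<in> A0" using t s S_subset_A0[OF k] by auto
  have "mul t s \<in> S k" "mul s t \<in> S k"
    using even_summand_mul_closed[of k] t0 s k by (auto simp: S_eq_even_summand)
  moreover have "B (mul t s) v = 0" "B (mul s t) v = 0" if "v \<in> V" for v
    using B_mul_odd_even[OF s0 _ t0, of v] B_assoc[of s t v] V that t0 s by auto
  ultimately show "mul t s \<in> {s \<in> S k. \<forall>v\<in>V. B s v = 0}" "mul s t \<in> {s \<in> S k. \<forall>v\<in>V. B s v = 0}"
    by auto
qed

text \<open>If no non-zero element of S k is orthogonal to V, a linear functional vanishing on V but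
  not at a point z of the k-th odd summand is represented by an even element whose k-th component
  would be such an orthogonal element.\<close>
lemma odd_summand_subset_if_no_orthogonal:
  assumes k: "k < n" and V: "subspace V" "V \<subseteq> odd_summand k"
    and no_orth: "{s \<in> S k. \<forall>v\<in>V. B s v = 0} = {0}"
  shows "odd_summand k \<subseteq> V"
proof
  fix z assume z: "z \<in> odd_summand k"
  show "z \<in> V"
  proof (rule ccontr)
    assume "z \<notin> V"
    then obtain \<psi> where \<psi>: "Vector_Spaces.linear scale (*) \<psi>" "\<And>v. v \<in> V \<Longrightarrow> \<psi> v = 0" "\<psi> z = 1"
      using exists_separating_functional[OF V(1)] by blast
    obtain x where x: "x \<in> A0" "\<And>y. y \<in> A1 \<Longrightarrow> B x y = \<psi> y"
      using even_represents_functional[OF \<psi>(1)] by blast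
    have B_proj: "B x y = B (even_proj k x) y" if "y \<in> odd_summand k" for y
      using B_even_proj[OF x(1) _ that] k by simp
    have "even_proj k x \<in> S k" using even_proj_mem[OF x(1)] k by (simp add: S_eq_even_summand)
    moreover have "B (even_proj k x) v = 0" if "v \<in> V" for v
      using B_proj x(2) \<psi>(2) V(2) odd_summand_subset_A1 that by (metis subsetD)
    ultimately have "even_proj k x = 0" using no_orth by blast
    moreover have "z \<in> A1" using z odd_summand_subset_A1 by blast
    ultimately show False using B_proj[OF z] x(2) \<psi>(3) by simp
  qed
qed

lemma odd_summand_irreducible: "k < n \<Longrightarrow> irreducible_sub_bimodule scale mul A0 A1 (odd_summand k)"
  unfolding irreducible_sub_bimodule_def
proof (intro conjI allI impI odd_summand_sub_bimodule odd_summand_nonzero)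
  fix V assume k: "k < n" and V: "sub_bimodule scale mul A0 (odd_summand k) V"
  have V_sub: "subspace V" "V \<subseteq> odd_summand k" "V \<subseteq> A1"
    using V odd_summand_subset_A1 by (auto simp: sub_bimodule_def)
  let ?J = "{s \<in> S k. \<forall>v\<in>V. B s v = 0}"
  have "?J = {0} \<or> ?J = S k"
    using V V_sub by (intro ideal_of_S_trivial[OF k] S_orthogonal_ideal[OF k]) (auto simp: sub_bimodule_def)
  then show "V = {0} \<or> V = odd_summand k"
  proof
    assume "?J = {0}"
    then show ?thesis using odd_summand_subset_if_no_orthogonal[OF k V_sub(1,2)] V_sub(2) by blast
  next
    assume "?J = S k"
    then have "V \<subseteq> {0}" using odd_summand_eq_0_if_orthogonal[OF k] V_sub(2) by blast
    then show ?thesis using V_sub(1) subspace_0 by blast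
  qed
qed

lemma S_mul_odd_summand: "k < n \<Longrightarrow> set_prod scale mul (S k) (odd_summand k) = odd_summand k"
proof -
  assume k: "k < n"
  have "set_prod scale mul (S k) (odd_summand k) \<subseteq> odd_summand k"
    using odd_summand_mul_closed(1) S_subset_A0[OF k] by (intro set_prod_subset subspace_odd_summand) auto
  then have "sub_bimodule scale mul A0 (odd_summand k) (set_prod scale mul (S k) (odd_summand k))"
    using S_mul_closed(1)[OF k] odd_summand_mul_closed(2) by (intro sub_bimodule_set_prod)
  then have "set_prod scale mul (S k) (odd_summand k) \<in> {{0}, odd_summand k}"
    using odd_summand_irreducible[OF k] unfolding irreducible_sub_bimodule_def by blast
  moreover have "set_prod scale mul (S k) (odd_summand k) \<noteq> {0}"
  proof
    assume "set_prod scale mul (S k) (odd_summand k) = {0}"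
    then have zero: "mul s z = 0" if "s \<in> S k" "z \<in> odd_summand k" for s z
      using that set_prod_eq_0_iff by blast
    have "z = 0" if z: "z \<in> odd_summand k" for z
    proof (rule odd_summand_eq_0_if_orthogonal[OF k z])
      show "B s z = 0" if "s \<in> S k" for s
      proof (rule B_S_eq_0_if_products[OF k _ that])
        show "B (mul s s') z = 0" if "s \<in> S k" "s' \<in> S k" for s s'
          using zero[OF that(2) z] by (simp add: B_assoc)
      qed
    qed
    then show False using odd_summand_nonzero[OF k] subspace_odd_summand subspace_0 by blast
  qed
  ultimately show ?thesis by blast
qed

lemma odd_summand_mul_S: "k < n \<Longrightarrow> set_prod scale mul (odd_summand k) (S k) = odd_summand k"
proof -
  assume k: "k < n"
  have "set_prod scale mul (odd_summand k) (S k) \<subseteq> odd_summand k"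
    using odd_summand_mul_closed(2) S_subset_A0[OF k] by (intro set_prod_subset subspace_odd_summand) auto
  then have "sub_bimodule scale mul A0 (odd_summand k) (set_prod scale mul (odd_summand k) (S k))"
    using S_mul_closed(2)[OF k] odd_summand_mul_closed(1) by (intro sub_bimodule_set_prod)
  then have "set_prod scale mul (odd_summand k) (S k) \<in> {{0}, odd_summand k}"
    using odd_summand_irreducible[OF k] unfolding irreducible_sub_bimodule_def by blast
  moreover have "set_prod scale mul (odd_summand k) (S k) \<noteq> {0}"
  proof
    assume "set_prod scale mul (odd_summand k) (S k) = {0}"
    then have zero: "mul z s = 0" if "z \<in> odd_summand k" "s \<in> S k" for s z
      using that set_prod_eq_0_iff by blast
    have "z = 0" if z: "z \<in> odd_summand k" for z
    proof (rule odd_summand_eq_0_if_orthogonal[OF k z])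
      show "B s z = 0" if "s \<in> S k" for s
      proof (rule B_S_eq_0_if_products[OF k _ that])
        fix s s' assume s: "s \<in> S k" "s' \<in> S k"
        have "s \<in> A0" "s' \<in> A0" "z \<in> A1"
          using s S_subset_A0[OF k] z odd_summand_subset_A1 by blast+
        then have "B (mul s s') z = B s' (mul z s)" by (simp add: B_mul_odd_even)
        then show "B (mul s s') z = 0" using zero[OF z s(1)] by simp
      qed
    qed
    then show False using odd_summand_nonzero[OF k] subspace_odd_summand subspace_0 by blast
  qed
  ultimately show ?thesis by blast
qed

lemma odd_summands_mul_zero:
  assumes "i < n" "j < n" "i \<noteq> j"
  shows "set_prod scale mul (odd_summand i) (odd_summand j) = {0}"
  unfolding set_prod_eq_0_iff
proof (intro ballI)
  fix y z assume y: "y \<in> odd_summand i" and z: "z \<in> odd_summand j"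
  have "mul y s = 0" if "s \<in> S j" for s
    using even_odd_mul_zero(2)[of j i s y] assms that y by (simp add: S_eq_even_summand)
  then show "mul y z = 0"
    using z S_mul_odd_summand[OF assms(2)] mul_left_set_prod[OF subspace_single_0, of "S j" "odd_summand j" y z]
    by (simp flip: mul_assoc)
qed

lemma odd_summand_square: "k < n \<Longrightarrow> set_prod scale mul (odd_summand k) (odd_summand k) \<in> {{0}, S k}"
proof -
  assume k: "k < n"
  have closed: "mul a y \<in> odd_summand k" "mul y a \<in> odd_summand k" if "a \<in> A0" "y \<in> odd_summand k" for a y
    using odd_summand_sub_bimodule that by (auto simp: sub_bimodule_def)
  have "mul y z \<in> S k" if "y \<in> odd_summand k" "z \<in> odd_summand k" for y z
  proof (rule mul_right_set_prod[OF subspace_S[OF k]])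
    show "y \<in> set_prod scale mul (S k) (odd_summand k)" using S_mul_odd_summand[OF k] that(1) by simp
    fix s y' assume "s \<in> S k" "y' \<in> odd_summand k"
    moreover have "mul y' z \<in> A0" using \<open>y' \<in> odd_summand k\<close> that(2) odd_summand_subset_A1 mul_A1_A1 by blast
    ultimately show "mul (mul s y') z \<in> S k"
      using S_mul_closed(2)[OF k] by (simp add: mul_assoc)
  qed
  then have "set_prod scale mul (odd_summand k) (odd_summand k) \<subseteq> S k"
    by (intro set_prod_subset subspace_S[OF k])
  then have "sub_bimodule scale mul (S k) (S k) (set_prod scale mul (odd_summand k) (odd_summand k))"
    using closed S_subset_A0[OF k] by (intro sub_bimodule_set_prod) auto
  then show ?thesis using ideal_of_S_trivial[OF k] by blast
qed

lemma last_odd_summand_mul_odd_summand: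
  assumes k: "k < n"
  shows "set_prod scale mul (odd_summand n) (odd_summand k) = {0}"
    and "set_prod scale mul (odd_summand k) (odd_summand n) = {0}"
  unfolding set_prod_eq_0_iff
proof safe
  fix y z assume y: "y \<in> odd_summand n" and z: "z \<in> odd_summand k"
  have "mul y s = 0" if "s \<in> S k" for s
    using last_odd_summand_mul_zero(2)[OF y] S_subset_A0[OF k] that by blast
  then show "mul y z = 0"
    using z S_mul_odd_summand[OF k] mul_left_set_prod[OF subspace_single_0, of "S k" "odd_summand k" y z]
    by (simp flip: mul_assoc)
next
  fix z y assume z: "z \<in> odd_summand k" and y: "y \<in> odd_summand n"
  have "mul s y = 0" if "s \<in> S k" for s
    using last_odd_summand_mul_zero(1)[OF y] S_subset_A0[OF k] that by blast
  then show "mul z y = 0"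
    using z odd_summand_mul_S[OF k] mul_right_set_prod[OF subspace_single_0, of "odd_summand k" "S k" y z]
    by (simp add: mul_assoc)
qed

lemma last_odd_summand_square: "set_prod scale mul (odd_summand n) (odd_summand n) \<subseteq> Ann mul A0"
proof (rule set_prod_subset)
  show "subspace (Ann mul A0)" using Ann_sub_bimodule by (simp add: sub_bimodule_def)
  fix y z assume y: "y \<in> odd_summand n" and z: "z \<in> odd_summand n"
  then have "mul y z \<in> A0" using odd_summand_subset_A1 mul_A1_A1 by blast
  then show "mul y z \<in> Ann mul A0"
    using last_odd_summand_mul_zero[OF y] last_odd_summand_mul_zero[OF z]
    by (simp add: Ann_def mul_assoc flip: mul_assoc[of _ y z])
qed

lemma last_odd_summand_annihilated:
  "set_prod scale mul A0 (odd_summand n) = {0}" "set_prod scale mul (odd_summand n) A0 = {0}"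
  using last_odd_summand_mul_zero by (auto simp: set_prod_eq_0_iff)

lemma internal_direct_sum_A1:
  "internal_direct_sum scale A1 {..n} (\<lambda>i. if i < n then odd_summand i else odd_summand n)"
  by (rule internal_direct_sum_cong[OF internal_direct_sum_odd_summand]) auto

lemma internal_direct_sum_UNIV:
  "internal_direct_sum scale UNIV {..2*n+1} (\<lambda>k. if k < n then S k else if k = n then Ann mul A0
      else if k < 2*n+1 then odd_summand (k - n - 1) else odd_summand n)"
  (is "internal_direct_sum scale UNIV _ ?G")
proof -
  have even: "internal_direct_sum scale A0 {..n} ?G"
    by (rule internal_direct_sum_cong[OF internal_direct_sum_A0]) auto
  have "bij_betw (\<lambda>j. j - Suc n) {Suc n..2*n+1} {..n}"
    by (rule bij_betw_byWitness[where f' = "\<lambda>i. i + Suc n"]) auto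
  from internal_direct_sum_reindex[OF internal_direct_sum_odd_summand this]
  have odd: "internal_direct_sum scale A1 {Suc n..2*n+1} ?G"
    by (rule internal_direct_sum_cong) (auto simp: Suc_diff_Suc numeral_2_eq_2)
  have "{..n} \<union> {Suc n..2*n+1} = {..2*n+1}" by auto
  then show ?thesis
    using internal_direct_sum_union[OF even odd _ A0_inter_A1] set_sum_A0_A1 by auto
qed

end

context odd_symmetric_superalgebra
begin

lemma exists_graded_decomposition:
  assumes semisimple: "semisimple_bimodule scale mul A0 A0"
  obtains n S where "graded_decomposition scale basis mul A0 A1 B n S"
proof -
  let ?N = "Ann mul A0"
  obtain C where C: "sub_bimodule scale mul A0 A0 C" "?N \<inter> C = {0}" "set_sum ?N C = A0"
    using semisimple Ann_sub_bimodule unfolding semisimple_bimodule_def by blast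
  obtain n :: nat and S where S: "\<forall>k<n. irreducible_sub_bimodule scale mul A0 A0 (S k)"
    "internal_direct_sum scale C {..<n} S"
    using sub_bimodule_irreducible_decomposition[OF semisimple C(1)] by blast
  let ?W = "\<lambda>k. if k < n then S k else ?N"
  have "internal_direct_sum scale C {..<n} ?W"
    by (rule internal_direct_sum_cong[OF S(2)]) auto
  moreover have "internal_direct_sum scale ?N {n} ?W"
    using internal_direct_sum_singleton[of ?W n] Ann_sub_bimodule by (simp add: sub_bimodule_def)
  ultimately have "internal_direct_sum scale (set_sum C ?N) ({..<n} \<union> {n}) ?W"
    using C(2) by (intro internal_direct_sum_union) auto
  moreover have "{..<n} \<union> {n} = {..n}" "set_sum C ?N = A0"
    using C(3) set_sum_commute by auto
  ultimately have "internal_direct_sum scale A0 {..n} ?W" by simp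
  then have "graded_decomposition scale basis mul A0 A1 B n S"
    using S(1) by unfold_locales auto
  then show ?thesis by (rule that)
qed

end

lemma fd_assoc_superalgebra_finite_dimensional:
  assumes "fd_assoc_superalgebra scale mul A0 A1"
  obtains basis where "finite_dimensional_vector_space scale basis"
proof -
  interpret vector_space scale using assms by (simp add: fd_assoc_superalgebra_def)
  obtain G where G: "finite G" "span G = UNIV" using assms by (auto simp: fd_assoc_superalgebra_def)
  obtain basis where basis: "independent basis" "UNIV \<subseteq> span basis"
    using basis_exists[of UNIV] by metis
  have "finite basis" using independent_span_bound[OF G(1) basis(1)] G(2) by blast
  with basis have "finite_dimensional_vector_space scale basis"
    by unfold_locales auto
  then show ?thesis by (rule that)
qed

theorem mainTheorem12:
  fixes scale :: "'k::field_char_0 \<Rightarrow> 'a::ab_group_add \<Rightarrow> 'a"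
    and mul :: "'a \<Rightarrow> 'a \<Rightarrow> 'a"
    and A0 A1 :: "'a set"
    and B :: "'a \<Rightarrow> 'a \<Rightarrow> 'k"
  assumes "alg_closed TYPE('k)"
    and "fd_assoc_superalgebra scale mul A0 A1"
    and "odd_symmetric_structure scale mul A0 A1 B"
    and "semisimple_bimodule scale mul A0 A0"
  shows "\<exists>(n::nat) (S :: nat \<Rightarrow> 'a set) (S' :: nat \<Rightarrow> 'a set) (N' :: 'a set).
     let N = Ann mul A0 in
     (\<forall>i<n. simple_ideal scale mul A0 (S i)) \<and>
     (\<forall>i<n. irreducible_sub_bimodule scale mul A0 A1 (S' i)) \<and>
     sub_bimodule scale mul A0 A1 N' \<and>
     set_prod scale mul A0 N' = {0} \<and> set_prod scale mul N' A0 = {0} \<and>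
     internal_direct_sum scale A0 {..n} (\<lambda>i. if i < n then S i else N) \<and>
     internal_direct_sum scale A1 {..n} (\<lambda>i. if i < n then S' i else N') \<and>
     internal_direct_sum scale UNIV {..2*n+1}
       (\<lambda>k. if k < n then S k else if k = n then N
            else if k < 2*n+1 then S' (k - n - 1) else N') \<and>
     (\<forall>i<n. \<forall>j<n. i \<noteq> j \<longrightarrow>
        set_prod scale mul (S' i) (S' j) = {0} \<and> set_prod scale mul (S' j) (S' i) = {0}) \<and>
     (\<forall>i<n. set_prod scale mul (S' i) (S' i) \<in> {{0}, S i}) \<and>
     (\<forall>i<n. set_prod scale mul N' (S' i) = {0} \<and> set_prod scale mul (S' i) N' = {0}) \<and>
     set_prod scale mul N' N' \<subseteq> N"
proof -
  obtain basis where "finite_dimensional_vector_space scale basis"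
    using fd_assoc_superalgebra_finite_dimensional[OF assms(2)] .
  then interpret odd_symmetric_superalgebra scale basis mul A0 A1 B
    using assms(2,3) by (simp add: odd_symmetric_superalgebra_def odd_symmetric_superalgebra_axioms_def)
  obtain n S where "graded_decomposition scale basis mul A0 A1 B n S"
    using exists_graded_decomposition[OF assms(4)] .
  then interpret graded_decomposition scale basis mul A0 A1 B n S .
  show ?thesis
    unfolding Let_def
  proof (rule exI[of _ n], rule exI[of _ S], rule exI[of _ odd_summand], rule exI[of _ "odd_summand n"],
      intro conjI allI impI)
    fix i j assume "i < n" "j < n" "i \<noteq> j"
    then show "set_prod scale mul (odd_summand i) (odd_summand j) = {0}"
      and "set_prod scale mul (odd_summand j) (odd_summand i) = {0}"
      using odd_summands_mul_zero[of i j] odd_summands_mul_zero[of j i] by auto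
  qed (rule internal_direct_sum_A0 internal_direct_sum_A1 internal_direct_sum_UNIV
      odd_summand_sub_bimodule last_odd_summand_square last_odd_summand_annihilated
    | erule S_simple odd_summand_irreducible odd_summand_square last_odd_summand_mul_odd_summand)+
qed

end
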